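(* Let $0<q<1$ and $q^*=2-q$. Let $X_1,X_2,\dots,X_n$ be positive i.i.d. random variables. Then for all $x>0$ and all $a>0$, $$\mathrm{Prob}\left(\frac1n\sum_{k=1}^nX_k\ge x\right)\le\exp_{q^*}(-anx)\,A^n(a),\qquad A(a)=\mathbb{E}\exp_q(aX_1).$$
   Context: For $q\in(0,2)$, $q\ne1$, the $q$-deformed exponential is $\exp_q(u)=[1+(1-q)u]_+^{1/(1-q)}$ for real $u$ (value in $[0,+\infty]$), where $[u]_+=\max(u,0)$. *)

theory Defs
  imports "HOL-Probability.Probability"
begin

definition exp_q :: "real \<Rightarrow> real \<Rightarrow> ennreal" where
  "exp_q q u = (let b = 1 + (1 - q) * u in
     if b > 0 then ennreal (b powr (1 / (1 - q)))
     else if 1 / (1 - q) > 0 then 0 else \<top>)"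

end

theory Submission
  imports Defs
begin

text \<open>For \<open>q < 1\<close> the
  function \<open>exp_q\<close> is increasing, its reciprocal on \<open>[0,\<infinity>)\<close> is \<open>u \<mapsto> exp_(2-q) (-u)\<close>, and it is
  supermultiplicative on nonnegative arguments, because \<open>1 + c \<Sum>u\<^sub>i \<le> \<Prod>(1 + c u\<^sub>i)\<close>. So Markov's
  inequality applied to \<open>exp_q (a \<Sum>X\<^sub>k)\<close>, followed by \<open>exp_q (a \<Sum>X\<^sub>k) \<le> \<Prod>exp_q (a X\<^sub>k)\<close> and
  independence, gives the bound.\<close>

lemma one_plus_sum_le_prod_one_plus:
  fixes y :: "'i \<Rightarrow> 'b :: linordered_semidom"
  assumes "\<And>i. i \<in> S \<Longrightarrow> 0 \<le> y i"
  shows "1 + (\<Sum>i\<in>S. y i) \<le> (\<Prod>i\<in>S. 1 + y i)"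
  using assms
proof (induction S rule: infinite_finite_induct)
  case (insert j S)
  have prod_ge_1: "1 \<le> (\<Prod>i\<in>S. 1 + y i)"
    using insert.prems by (intro prod_ge_1) (simp add: add_increasing)
  have "1 + (\<Sum>i\<in>insert j S. y i) = y j + (1 + (\<Sum>i\<in>S. y i))"
    using insert.hyps by (simp add: algebra_simps)
  also have "\<dots> \<le> y j * (\<Prod>i\<in>S. 1 + y i) + (\<Prod>i\<in>S. 1 + y i)"
    using insert prod_ge_1 mult_left_mono[OF prod_ge_1, of "y j"] by (intro add_mono) auto
  also have "\<dots> = (\<Prod>i\<in>insert j S. 1 + y i)"
    using insert.hyps by (simp add: algebra_simps)
  finally show ?case .
qed simp_all

lemma exp_q_eq_powr:
  assumes "1 + (1 - q) * u > 0"
  shows "exp_q q u = ennreal ((1 + (1 - q) * u) powr (1 / (1 - q)))"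
  using assms unfolding exp_q_def Let_def by simp

lemma borel_measurable_exp_q [measurable]: "exp_q q \<in> borel_measurable borel"
  unfolding exp_q_def Let_def by measurable

lemma mono_exp_q:
  assumes "q < 1"
  shows "mono (exp_q q)"
proof
  fix u v :: real
  assume "u \<le> v"
  then have base_le: "1 + (1 - q) * u \<le> 1 + (1 - q) * v"
    using assms by (simp add: mult_left_mono)
  show "exp_q q u \<le> exp_q q v"
  proof (cases "1 + (1 - q) * u > 0")
    case True
    with base_le have "1 + (1 - q) * v > 0" by linarith
    with True base_le show ?thesis
      using assms by (simp add: exp_q_eq_powr ennreal_leI powr_mono2)
  next
    case False
    then show ?thesis using assms by (simp add: exp_q_def)
  qed
qed

lemma exp_q_sum_le_prod:
  assumes "q < 1" "\<And>i. i \<in> S \<Longrightarrow> 0 \<le> u i"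
  shows "exp_q q (\<Sum>i\<in>S. u i) \<le> (\<Prod>i\<in>S. exp_q q (u i))"
proof -
  define c where "c = 1 - q"
  have c: "c > 0" using assms(1) by (simp add: c_def)
  have cu_nonneg: "0 \<le> c * u i" if "i \<in> S" for i
    using c assms(2)[OF that] by simp
  have sum_nonneg: "0 \<le> (\<Sum>i\<in>S. c * u i)"
    using cu_nonneg by (rule sum_nonneg)
  have "exp_q q (\<Sum>i\<in>S. u i) = ennreal ((1 + (\<Sum>i\<in>S. c * u i)) powr (1 / c))"
    using sum_nonneg by (subst exp_q_eq_powr) (simp_all add: c_def sum_distrib_left)
  also have "\<dots> \<le> ennreal ((\<Prod>i\<in>S. 1 + c * u i) powr (1 / c))"
    using cu_nonneg sum_nonneg c
    by (intro ennreal_leI powr_mono2 one_plus_sum_le_prod_one_plus) auto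
  also have "\<dots> = (\<Prod>i\<in>S. ennreal ((1 + c * u i) powr (1 / c)))"
    by (simp add: prod_powr_distrib prod_ennreal)
  also have "\<dots> = (\<Prod>i\<in>S. exp_q q (u i))"
    using cu_nonneg by (intro prod.cong refl) (simp add: exp_q_eq_powr c_def add_pos_nonneg)
  finally show ?thesis .
qed

lemma exp_q_dual_mult:
  assumes "q < 1" "0 \<le> u"
  shows "exp_q (2 - q) (- u) * exp_q q u = 1"
proof -
  define b where "b = 1 + (1 - q) * u"
  have b: "b > 0" using assms by (simp add: b_def add_pos_nonneg)
  have "1 / (1 - (2 - q)) = - (1 / (1 - q))"
    by (simp add: divide_minus_right[symmetric])
  then have "exp_q (2 - q) (- u) = ennreal (b powr (- (1 / (1 - q))))"
    using b by (subst exp_q_eq_powr) (simp_all add: b_def algebra_simps)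
  moreover have "exp_q q u = ennreal (b powr (1 / (1 - q)))"
    using b by (simp add: b_def exp_q_eq_powr)
  ultimately show ?thesis
    using b by (simp add: ennreal_mult'[symmetric] powr_add[symmetric])
qed

lemma (in prob_space) nn_integral_prod_indep_identically_distributed:
  fixes g :: "'b \<Rightarrow> ennreal"
  assumes "finite I" "indep_vars (\<lambda>_. N) X I"
    and "\<And>i. i \<in> I \<Longrightarrow> distr M N (X i) = distr M N Y"
    and "Y \<in> measurable M N" "g \<in> borel_measurable N"
  shows "(\<integral>\<^sup>+\<omega>. (\<Prod>i\<in>I. g (X i \<omega>)) \<partial>M) = (\<integral>\<^sup>+\<omega>. g (Y \<omega>) \<partial>M) ^ card I"
proof -
  have "(\<integral>\<^sup>+\<omega>. (\<Prod>i\<in>I. g (X i \<omega>)) \<partial>M) = (\<Prod>i\<in>I. \<integral>\<^sup>+\<omega>. g (X i \<omega>) \<partial>M)"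
    using assms(1,5) indep_vars_compose2[OF assms(2), of "\<lambda>_. g" "\<lambda>_. borel"]
    by (intro indep_vars_nn_integral) auto
  also have "\<dots> = (\<Prod>i\<in>I. \<integral>\<^sup>+\<omega>. g (Y \<omega>) \<partial>M)"
  proof (intro prod.cong refl)
    fix i assume i: "i \<in> I"
    have "X i \<in> measurable M N"
      using assms(2) i by (auto simp: indep_vars_def)
    then show "(\<integral>\<^sup>+\<omega>. g (X i \<omega>) \<partial>M) = (\<integral>\<^sup>+\<omega>. g (Y \<omega>) \<partial>M)"
      using assms(3-5) i by (simp add: nn_integral_distr[symmetric])
  qed
  finally show ?thesis by simp
qed

lemma emeasure_ge_le_exp_q_dual_nn_integral:
  assumes "q < 1" "0 \<le> u" "f \<in> borel_measurable M"
  shows "emeasure M {\<omega> \<in> space M. u \<le> f \<omega>} \<le> exp_q (2 - q) (- u) * (\<integral>\<^sup>+\<omega>. exp_q q (f \<omega>) \<partial>M)"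
proof -
  define A where "A = {\<omega> \<in> space M. u \<le> f \<omega>}"
  have A_sets: "A \<in> sets M" unfolding A_def using assms(3) by measurable
  have "emeasure M A = exp_q (2 - q) (- u) * (exp_q q u * emeasure M A)"
    using exp_q_dual_mult[OF assms(1,2)] by (simp add: mult.assoc[symmetric])
  also have "\<dots> = exp_q (2 - q) (- u) * (\<integral>\<^sup>+\<omega>. exp_q q u * indicator A \<omega> \<partial>M)"
    using A_sets by (simp add: nn_integral_cmult_indicator)
  also have "\<dots> \<le> exp_q (2 - q) (- u) * (\<integral>\<^sup>+\<omega>. exp_q q (f \<omega>) \<partial>M)"
    using monoD[OF mono_exp_q[OF assms(1)]]
    by (intro mult_left_mono[OF nn_integral_mono]) (simp_all add: A_def split: split_indicator)
  finally show ?thesis unfolding A_def .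
qed

theorem proposition7:
  fixes M :: "'a measure" and X :: "nat \<Rightarrow> 'a \<Rightarrow> real"
    and q :: real and n :: nat and x a :: real
  assumes "prob_space M"
    and "0 < q" "q < 1"
    and "n \<ge> 1"
    and "\<And>k. k \<in> {1..n} \<Longrightarrow> X k \<in> borel_measurable M"
    and "prob_space.indep_vars M (\<lambda>_. borel) X {1..n}"
    and "\<And>k. k \<in> {1..n} \<Longrightarrow> distr M borel (X k) = distr M borel (X 1)"
    and "\<And>k \<omega>. k \<in> {1..n} \<Longrightarrow> \<omega> \<in> space M \<Longrightarrow> X k \<omega> > 0"
    and "x > 0" "a > 0"
  shows "ennreal (measure M {\<omega> \<in> space M. (1 / real n) * (\<Sum>k=1..n. X k \<omega>) \<ge> x})
    \<le> exp_q (2 - q) (- a * real n * x) * (\<integral>\<^sup>+ \<omega>. exp_q q (a * X 1 \<omega>) \<partial>M) ^ n"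
proof -
  interpret prob_space M by fact
  have event_eq: "{\<omega> \<in> space M. (1 / real n) * (\<Sum>k=1..n. X k \<omega>) \<ge> x}
      = {\<omega> \<in> space M. a * real n * x \<le> (\<Sum>k=1..n. a * X k \<omega>)}"
    using assms(4,10) by (auto simp: field_simps sum_distrib_left[symmetric])
  have sum_le_prod: "exp_q q (\<Sum>k=1..n. a * X k \<omega>) \<le> (\<Prod>k\<in>{1..n}. exp_q q (a * X k \<omega>))"
    if "\<omega> \<in> space M" for \<omega>
    using assms(3,8,10) that by (intro exp_q_sum_le_prod) (auto intro: less_imp_le)
  have moment_prod: "(\<integral>\<^sup>+\<omega>. (\<Prod>k\<in>{1..n}. exp_q q (a * X k \<omega>)) \<partial>M)
      = (\<integral>\<^sup>+\<omega>. exp_q q (a * X 1 \<omega>) \<partial>M) ^ card {1..n}"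
    by (rule nn_integral_prod_indep_identically_distributed) (use assms(4-7) in auto)
  have "ennreal (measure M {\<omega> \<in> space M. a * real n * x \<le> (\<Sum>k=1..n. a * X k \<omega>)})
      \<le> exp_q (2 - q) (- (a * real n * x)) * (\<integral>\<^sup>+\<omega>. exp_q q (\<Sum>k=1..n. a * X k \<omega>) \<partial>M)"
    using assms(3,5,9,10)
    by (simp add: emeasure_eq_measure[symmetric] emeasure_ge_le_exp_q_dual_nn_integral)
  also have "\<dots> \<le> exp_q (2 - q) (- (a * real n * x)) * (\<integral>\<^sup>+\<omega>. (\<Prod>k\<in>{1..n}. exp_q q (a * X k \<omega>)) \<partial>M)"
    using sum_le_prod by (intro mult_left_mono[OF nn_integral_mono]) simp_all
  finally show ?thesis
    unfolding event_eq moment_prod by simp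
qed

end
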